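(* Let $\Bbbk$ be an algebraically closed field of characteristic $2$ and let $\mathfrak{u}(\mathfrak{m})$ be the algebra generated by $a,b,c$ with relations $ab+ba=c$, $ac+ca=a$, $bc+cb=b$, $a^4=b^4=0$, $c^2+c=0$. Then $\operatorname{Ext}^1_{\mathfrak{u}(\mathfrak{m})}(V_1,V_1)=0$.
   Context: $V_1$ is the three-dimensional module with basis $v_1,v_2,v_3$ and action $av_1=v_2$, $av_2=v_3$, $av_3=0$; $bv_1=0$, $bv_2=v_1$, $bv_3=v_2$; $cv_1=v_1$, $cv_2=0$, $cv_3=v_3$. *)

theory Defs
  imports Main "HOL-Computational_Algebra.Polynomial" "HOL-Library.Product_Plus"
begin

definition alg_closed :: "'k::field itself \<Rightarrow> bool" where
  "alg_closed _ \<longleftrightarrow> (\<forall>p::'k poly. degree p > 0 \<longrightarrow> (\<exists>x. poly p x = 0))"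

definition um_module ::
  "('k::field \<Rightarrow> 'e::ab_group_add \<Rightarrow> 'e) \<Rightarrow> ('e \<Rightarrow> 'e) \<Rightarrow> ('e \<Rightarrow> 'e) \<Rightarrow> ('e \<Rightarrow> 'e) \<Rightarrow> bool" where
  "um_module s A B C \<longleftrightarrow>
     Vector_Spaces.linear s s A \<and> Vector_Spaces.linear s s B \<and> Vector_Spaces.linear s s C \<and>
     (\<forall>v. A (B v) + B (A v) = C v) \<and>
     (\<forall>v. A (C v) + C (A v) = A v) \<and>
     (\<forall>v. B (C v) + C (B v) = B v) \<and>
     (\<forall>v. (A ^^ 4) v = 0) \<and> (\<forall>v. (B ^^ 4) v = 0) \<and>
     (\<forall>v. C (C v) + C v = 0)"

definition um_hom ::
  "('k::field \<Rightarrow> 'e::ab_group_add \<Rightarrow> 'e) \<Rightarrow> ('e \<Rightarrow> 'e) \<Rightarrow> ('e \<Rightarrow> 'e) \<Rightarrow> ('e \<Rightarrow> 'e) \<Rightarrow>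
   ('k \<Rightarrow> 'f::ab_group_add \<Rightarrow> 'f) \<Rightarrow> ('f \<Rightarrow> 'f) \<Rightarrow> ('f \<Rightarrow> 'f) \<Rightarrow> ('f \<Rightarrow> 'f) \<Rightarrow>
   ('e \<Rightarrow> 'f) \<Rightarrow> bool" where
  "um_hom s1 A1 B1 C1 s2 A2 B2 C2 f \<longleftrightarrow>
     Vector_Spaces.linear s1 s2 f \<and>
     (\<forall>v. f (A1 v) = A2 (f v)) \<and> (\<forall>v. f (B1 v) = B2 (f v)) \<and> (\<forall>v. f (C1 v) = C2 (f v))"

text \<open>The module V_1 on k^3, coordinates w.r.t. the basis v1, v2, v3:
  (x,y,z) = x v1 + y v2 + z v3.\<close>
definition V1_scale :: "'k::field \<Rightarrow> 'k \<times> 'k \<times> 'k \<Rightarrow> 'k \<times> 'k \<times> 'k" where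
  "V1_scale r v = (case v of (x, y, z) \<Rightarrow> (r * x, r * y, r * z))"

definition V1_a :: "'k::field \<times> 'k \<times> 'k \<Rightarrow> 'k \<times> 'k \<times> 'k" where
  "V1_a v = (case v of (x, y, z) \<Rightarrow> (0, x, y))"

definition V1_b :: "'k::field \<times> 'k \<times> 'k \<Rightarrow> 'k \<times> 'k \<times> 'k" where
  "V1_b v = (case v of (x, y, z) \<Rightarrow> (y, z, 0))"

definition V1_c :: "'k::field \<times> 'k \<times> 'k \<Rightarrow> 'k \<times> 'k \<times> 'k" where
  "V1_c v = (case v of (x, y, z) \<Rightarrow> (x, 0, z))"

end

theory Submission
  imports Defs
begin

text \<open>
  An extension \<open>0 \<rightarrow> V\<^sub>1 \<rightarrow> E \<rightarrow> V\<^sub>1 \<rightarrow> 0\<close> splits as soon as some \<open>e \<in> E\<close> over \<open>v\<^sub>1\<close>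
  satisfies \<open>C e = e\<close>, \<open>B e = 0\<close> and \<open>A\<^sup>3 e = 0\<close>: these relations present \<open>V\<^sub>1\<close> as the
  module generated by \<open>v\<^sub>1\<close>, so \<open>v\<^sub>1 \<mapsto> e\<close>, \<open>v\<^sub>2 \<mapsto> A e\<close>, \<open>v\<^sub>3 \<mapsto> A\<^sup>2 e\<close> is a homomorphism.
  In characteristic 2 the relation \<open>c\<^sup>2 + c = 0\<close> makes \<open>C\<close> idempotent, so \<open>C e\<^sub>0\<close> is a
  \<open>C\<close>-fixed lift of \<open>v\<^sub>1\<close> for any lift \<open>e\<^sub>0\<close>. Then \<open>B (C e\<^sub>0)\<close> lies in the submodule
  \<open>V\<^sub>1\<close> and is killed by \<open>C\<close>, hence equals \<open>b w\<close> for a \<open>c\<close>-fixed \<open>w \<in> V\<^sub>1\<close>; subtracting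
  \<open>w\<close> gives \<open>B e = 0\<close>. Finally \<open>A\<^sup>3 e\<close> lies in the submodule and is killed by both \<open>B\<close> and
  \<open>C\<close>, which forces it to vanish.
\<close>

lemma vector_space_V1_scale: "vector_space (V1_scale :: 'k::field \<Rightarrow> _)"
  by unfold_locales (auto simp: V1_scale_def algebra_simps split: prod.splits)

lemma V1_b_c_eq_0_imp_eq_0: "V1_b u = 0 \<Longrightarrow> V1_c u = 0 \<Longrightarrow> u = 0"
  by (cases u) (simp add: V1_b_def V1_c_def zero_prod_def)

lemma V1_c_eq_0_imp_b_image: "V1_c u = 0 \<Longrightarrow> \<exists>w. u = V1_b w \<and> V1_c w = w"
  by (cases u) (auto simp: V1_b_def V1_c_def zero_prod_def)

definition V1_induced :: "('k::field \<Rightarrow> 'e::ab_group_add \<Rightarrow> 'e) \<Rightarrow> ('e \<Rightarrow> 'e) \<Rightarrow> 'e \<Rightarrow>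
    'k \<times> 'k \<times> 'k \<Rightarrow> 'e" where
  "V1_induced s A e v = (case v of (x, y, z) \<Rightarrow> s x e + s y (A e) + s z (A (A e)))"

locale char2_um_module =
  fixes s :: "'k::field \<Rightarrow> 'e::ab_group_add \<Rightarrow> 'e" and A B C :: "'e \<Rightarrow> 'e"
  assumes um_module: "um_module s A B C"
    and char2: "(2::'k) = 0"
begin

sublocale vector_space s
  using um_module by (simp add: um_module_def Vector_Spaces.linear_iff)

sublocale A: Vector_Spaces.linear s s A
  using um_module by (simp add: um_module_def)

sublocale B: Vector_Spaces.linear s s B
  using um_module by (simp add: um_module_def)

sublocale C: Vector_Spaces.linear s s C
  using um_module by (simp add: um_module_def)

lemma AB_BA: "A (B v) + B (A v) = C v"
  and AC_CA: "A (C v) + C (A v) = A v"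
  and BC_CB: "B (C v) + C (B v) = B v"
  and CC_C: "C (C v) + C v = 0"
  using um_module by (simp_all add: um_module_def)

lemma add_self_eq_0: "(x::'e) + x = 0"
proof -
  have "x + x = s 1 x + s 1 x"
    by simp
  also have "\<dots> = s (1 + 1) x"
    by (rule scale_left_distrib[symmetric])
  also have "\<dots> = 0"
    using char2 by simp
  finally show ?thesis .
qed

lemma minus_eq_self: "- (x::'e) = x"
  using add_self_eq_0 by (simp add: neg_eq_iff_add_eq_0)

lemma C_idem: "C (C v) = C v"
proof -
  have "C (C v) = - C v"
    using CC_C[of v] by (rule eq_neg_iff_add_eq_0[THEN iffD2])
  then show ?thesis
    by (simp add: minus_eq_self)
qed

lemma B_C_on_A_powers:
  assumes "C e = e" and "B e = 0"
  shows "C (A e) = 0" and "B (A e) = e" and "C (A (A e)) = A (A e)" and "B (A (A e)) = A e"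
proof -
  show CA: "C (A e) = 0"
    using AC_CA[of e] assms by simp
  show BA: "B (A e) = e"
    using AB_BA[of e] assms by simp
  show "C (A (A e)) = A (A e)"
    using AC_CA[of "A e"] CA by simp
  have "A e + B (A (A e)) = 0"
    using AB_BA[of "A e"] CA BA by simp
  then have "- A e = B (A (A e))"
    by (rule minus_unique)
  then show "B (A (A e)) = A e"
    by (simp add: minus_eq_self)
qed

lemma um_hom_V1_induced:
  assumes "C e = e" and "B e = 0" and "A (A (A e)) = 0"
  shows "um_hom V1_scale V1_a V1_b V1_c s A B C (V1_induced s A e)"
  unfolding um_hom_def Vector_Spaces.linear_iff
proof (intro conjI allI)
  show "vector_space (V1_scale :: 'k \<Rightarrow> _)"
    by (rule vector_space_V1_scale)
  show "vector_space s"
    by unfold_locales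
  fix x y :: "'k \<times> 'k \<times> 'k" and c :: 'k
  show "V1_induced s A e (x + y) = V1_induced s A e x + V1_induced s A e y"
    by (cases x; cases y) (simp add: V1_induced_def scale_left_distrib add_ac)
  show "V1_induced s A e (V1_scale c x) = s c (V1_induced s A e x)"
    by (cases x) (simp add: V1_induced_def V1_scale_def scale_right_distrib)
  show "V1_induced s A e (V1_a x) = A (V1_induced s A e x)"
    by (cases x) (simp add: V1_induced_def V1_a_def A.add A.scale assms(3))
  show "V1_induced s A e (V1_b x) = B (V1_induced s A e x)"
    by (cases x) (simp add: V1_induced_def V1_b_def B.add B.scale assms(2) B_C_on_A_powers[OF assms(1,2)])
  show "V1_induced s A e (V1_c x) = C (V1_induced s A e x)"
    by (cases x) (simp add: V1_induced_def V1_c_def C.add C.scale assms(1) B_C_on_A_powers[OF assms(1,2)])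
qed

end

locale V1_self_extension = char2_um_module s A B C
  for s :: "'k::field \<Rightarrow> 'e::ab_group_add \<Rightarrow> 'e" and A B C +
  fixes i :: "'k \<times> 'k \<times> 'k \<Rightarrow> 'e" and p :: "'e \<Rightarrow> 'k \<times> 'k \<times> 'k"
  assumes i_hom: "um_hom V1_scale V1_a V1_b V1_c s A B C i"
    and p_hom: "um_hom s A B C V1_scale V1_a V1_b V1_c p"
    and inj_i: "inj i" and surj_p: "surj p"
    and range_i_eq_ker_p: "range i = {x. p x = 0}"
begin

sublocale i: Vector_Spaces.linear V1_scale s i
  using i_hom unfolding um_hom_def by blast

sublocale p: Vector_Spaces.linear s V1_scale p
  using p_hom unfolding um_hom_def by blast

lemma i_a: "i (V1_a u) = A (i u)"
  and i_b: "i (V1_b u) = B (i u)"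
  and i_c: "i (V1_c u) = C (i u)"
  using i_hom unfolding um_hom_def by blast+

lemma p_A: "p (A x) = V1_a (p x)"
  and p_B: "p (B x) = V1_b (p x)"
  and p_C: "p (C x) = V1_c (p x)"
  using p_hom unfolding um_hom_def by blast+

lemma p_i: "p (i u) = 0"
  using range_i_eq_ker_p by blast

lemma ker_p_imp_range_i:
  assumes "p x = 0"
  obtains u where "x = i u"
  using assms range_i_eq_ker_p by blast

lemma i_eq_0_iff: "i u = 0 \<longleftrightarrow> u = 0"
  using inj_eq[OF inj_i, of u 0] by simp

lemma exists_fixed_lift: "\<exists>e. p e = (1, 0, 0) \<and> C e = e \<and> B e = 0"
proof -
  obtain e\<^sub>0 where "p e\<^sub>0 = (1, 0, 0)"
    using surj_p by (metis surjD)
  define e\<^sub>1 where "e\<^sub>1 = C e\<^sub>0"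
  have p_e\<^sub>1: "p e\<^sub>1 = (1, 0, 0)"
    using \<open>p e\<^sub>0 = (1, 0, 0)\<close> by (simp add: e\<^sub>1_def p_C V1_c_def)
  have C_e\<^sub>1: "C e\<^sub>1 = e\<^sub>1"
    by (simp add: e\<^sub>1_def C_idem)
  have "p (B e\<^sub>1) = 0"
    using p_e\<^sub>1 by (simp add: p_B V1_b_def zero_prod_def)
  then obtain u where u: "B e\<^sub>1 = i u"
    by (rule ker_p_imp_range_i)
  have "C (B e\<^sub>1) = 0"
    using BC_CB[of e\<^sub>1] C_e\<^sub>1 by simp
  then have "V1_c u = 0"
    by (simp add: u flip: i_c i_eq_0_iff)
  then obtain w where w: "u = V1_b w" "V1_c w = w"
    using V1_c_eq_0_imp_b_image by blast
  define e where "e = e\<^sub>1 - i w"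
  have "p e = (1, 0, 0)"
    by (simp add: e_def p.diff p_i p_e\<^sub>1)
  moreover have "C e = e"
    using i_c[of w] by (simp add: e_def C.diff C_e\<^sub>1 w(2))
  moreover have "B e = 0"
    by (simp add: e_def B.diff u w(1) flip: i_b)
  ultimately show ?thesis
    by blast
qed

lemma A_cube_eq_0:
  assumes "C e = e" and "B e = 0"
  shows "A (A (A e)) = 0"
proof -
  have "p (A (A (A e))) = 0"
    by (simp add: p_A V1_a_def zero_prod_def split: prod.split)
  then obtain t where t: "A (A (A e)) = i t"
    by (rule ker_p_imp_range_i)
  have "B (A (A (A e))) = 0"
    using AB_BA[of "A (A e)"] B_C_on_A_powers[OF assms] add_self_eq_0 by simp
  then have "V1_b t = 0"
    by (simp add: t flip: i_b i_eq_0_iff)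
  moreover have "C (A (A (A e))) = 0"
    using AC_CA[of "A (A e)"] B_C_on_A_powers[OF assms] by simp
  then have "V1_c t = 0"
    by (simp add: t flip: i_c i_eq_0_iff)
  ultimately have "t = 0"
    by (rule V1_b_c_eq_0_imp_eq_0)
  then show ?thesis
    by (simp add: t)
qed

lemma p_V1_induced:
  assumes "p e = (1, 0, 0)"
  shows "p (V1_induced s A e v) = v"
  by (cases v) (simp add: V1_induced_def p.add p.scale p_A assms V1_a_def V1_scale_def)

lemma splits: "\<exists>\<sigma>. um_hom V1_scale V1_a V1_b V1_c s A B C \<sigma> \<and> (\<forall>v. p (\<sigma> v) = v)"
proof -
  obtain e where "p e = (1, 0, 0)" and "C e = e" and "B e = 0"
    using exists_fixed_lift by blast
  then show ?thesis
    using um_hom_V1_induced A_cube_eq_0 p_V1_induced by blast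
qed

end

theorem lemma3p8:
  fixes s :: "'k::field \<Rightarrow> 'e::ab_group_add \<Rightarrow> 'e"
    and A B C :: "'e \<Rightarrow> 'e"
    and i :: "'k \<times> 'k \<times> 'k \<Rightarrow> 'e"
    and p :: "'e \<Rightarrow> 'k \<times> 'k \<times> 'k"
  assumes "alg_closed TYPE('k)"
    and "(2::'k) = 0"
    and "um_module s A B C"
    and "um_hom V1_scale V1_a V1_b V1_c s A B C i"
    and "um_hom s A B C V1_scale V1_a V1_b V1_c p"
    and "inj i" and "surj p"
    and "range i = {e. p e = 0}"
  shows "\<exists>\<sigma>. um_hom V1_scale V1_a V1_b V1_c s A B C \<sigma> \<and> (\<forall>v. p (\<sigma> v) = v)"
proof -
  interpret V1_self_extension s A B C i p
    using assms(2-8) by unfold_locales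
  show ?thesis
    by (rule splits)
qed

end
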